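(* Let $d\in\mathbb Z^+$, $c>0$, and let $\boldsymbol\beta=(\beta_j)_{j\ge1}$ and $(\Upsilon_{\boldsymbol\nu,\boldsymbol\lambda})_{\boldsymbol\nu\in\mathscr F,\boldsymbol\lambda\in\mathbb Z^d}$ be sequences of non-negative reals such that $\Upsilon_{\boldsymbol\nu,\boldsymbol 0}=\delta_{\boldsymbol\nu,\boldsymbol 0}$; $\Upsilon_{\boldsymbol\nu,\boldsymbol\lambda}=0$ if $|\boldsymbol\nu|<|\boldsymbol\lambda|$ or if $\boldsymbol\lambda$ has a negative entry; and otherwise, for all $j\ge1$, $$\Upsilon_{\boldsymbol\nu+\boldsymbol e_j,\boldsymbol\lambda}\le\beta_j\sum_{k=0}^{\nu_j}c^{k+1}\binom{\nu_j}{k}\sum_{\ell\in\{1,\dots,d\}:\lambda_\ell>0}\Upsilon_{\boldsymbol\nu-k\boldsymbol e_j,\boldsymbol\lambda-\boldsymbol e_\ell}.$$ Then for all $\boldsymbol\nu\in\mathscr F$ and $\boldsymbol\lambda\in\mathbb N_0^d$, $$\Upsilon_{\boldsymbol\nu,\boldsymbol\lambda}\le c^{|\boldsymbol\nu|}\frac{|\boldsymbol\lambda|!}{\boldsymbol\lambda!}\sum_{\boldsymbol m\le\boldsymbol\nu,\,|\boldsymbol m|=|\boldsymbol\lambda|}\boldsymbol\beta^{\boldsymbol m}\prod_{i\ge1}S(\nu_i,m_i).$$ If the recursive inequality is an equality, so is the conclusion.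
   Context: $\mathscr F$ is the set of finitely supported multi-indices in $\mathbb N_0^{\mathbb N}$; $|\boldsymbol\nu|=\sum\nu_j$, $\boldsymbol\lambda!=\prod\lambda_\ell!$, $\boldsymbol\beta^{\boldsymbol m}=\prod\beta_j^{m_j}$, componentwise order; $\boldsymbol e_j$ denotes a unit multi-index (in $\mathscr F$ or in $\mathbb Z^d$ as appropriate); $\delta$ is the Kronecker delta. $S(n,m)=\frac1{m!}\sum_{j=0}^m(-1)^{m-j}\binom mj j^n$ (Stirling numbers of the second kind, $S(0,0)=1$). *)

theory Defs
  imports Complex_Main "HOL-Combinatorics.Stirling"
begin

text \<open>Multi-indices: finitely supported functions nat => nat (index set N is 0-based here).\<close>

definition msupp :: "(nat \<Rightarrow> nat) \<Rightarrow> nat set" where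
  "msupp \<nu> = {i. \<nu> i \<noteq> 0}"

definition multi_indices :: "(nat \<Rightarrow> nat) set" where
  "multi_indices = {\<nu>. finite (msupp \<nu>)}"

definition mabs :: "(nat \<Rightarrow> nat) \<Rightarrow> nat" where
  "mabs \<nu> = (\<Sum>i\<in>msupp \<nu>. \<nu> i)"

definition zvecs :: "nat \<Rightarrow> (nat \<Rightarrow> int) set" where
  "zvecs d = {lam. \<forall>l\<ge>d. lam l = 0}"

definition zabs :: "nat \<Rightarrow> (nat \<Rightarrow> int) \<Rightarrow> int" where
  "zabs d lam = (\<Sum>l<d. lam l)"

definition zfact :: "nat \<Rightarrow> (nat \<Rightarrow> int) \<Rightarrow> nat" where
  "zfact d lam = (\<Prod>l<d. fact (nat (lam l)))"

definition mpow :: "(nat \<Rightarrow> real) \<Rightarrow> (nat \<Rightarrow> nat) \<Rightarrow> real" where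
  "mpow \<beta> m = (\<Prod>i\<in>msupp m. \<beta> i ^ m i)"

definition bound_A4 :: "nat \<Rightarrow> real \<Rightarrow> (nat \<Rightarrow> real) \<Rightarrow> (nat \<Rightarrow> nat) \<Rightarrow> (nat \<Rightarrow> int) \<Rightarrow> real" where
  "bound_A4 d c \<beta> \<nu> lam =
     c ^ mabs \<nu> * (real (fact (nat (zabs d lam))) / real (zfact d lam)) *
     (\<Sum>m\<in>{m. (\<forall>i. m i \<le> \<nu> i) \<and> int (mabs m) = zabs d lam}.
        mpow \<beta> m * (\<Prod>i\<in>msupp \<nu>. real (Stirling (\<nu> i) (m i))))"

definition rec_rhs :: "nat \<Rightarrow> real \<Rightarrow> (nat \<Rightarrow> real) \<Rightarrow> ((nat \<Rightarrow> nat) \<Rightarrow> (nat \<Rightarrow> int) \<Rightarrow> real)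
    \<Rightarrow> (nat \<Rightarrow> nat) \<Rightarrow> (nat \<Rightarrow> int) \<Rightarrow> nat \<Rightarrow> real" where
  "rec_rhs d c \<beta> Y \<nu> lam j =
     \<beta> j * (\<Sum>k=0..\<nu> j. c ^ (k + 1) * real (\<nu> j choose k) *
        (\<Sum>l\<in>{l. l < d \<and> lam l > 0}. Y (\<nu>(j := \<nu> j - k)) (lam(l := lam l - 1))))"

end

theory Submission
  imports Defs
begin

text \<open>
  The bound is an exact solution of the recursion. Write (\<open>stirling_sum\<close> below)
  \<open>G(\<nu>, n) = (\<Sum>m \<le> \<nu>, |m| = n. \<beta>^m \<Prod>i. S(\<nu>_i, m_i))\<close>, so that the bound is
  \<open>c^|\<nu>| (|\<lambda>|!/\<lambda>!) G(\<nu>, |\<lambda>|)\<close>. The multinomial coefficients satisfy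
  \<open>\<Sum>\<^sub>\<ell> (|\<lambda>|-1)!/(\<lambda>-e\<^sub>\<ell>)! = |\<lambda>|!/\<lambda>!\<close>, and splitting off coordinate \<open>j\<close> together with
  \<open>S(a+1, s+1) = \<Sum>\<^sub>k C(a,k) S(a-k, s)\<close> gives
  \<open>G(\<nu>+e\<^sub>j, n+1) = \<beta>\<^sub>j \<Sum>\<^sub>k C(\<nu>\<^sub>j,k) G(\<nu>-k e\<^sub>j, n)\<close>.
  As the recursion has non-negative coefficients and refers only to multi-indices of smaller order,
  induction on \<open>|\<nu>|\<close> compares a sub-solution (or a solution) with this exact solution.
\<close>

lemma sum_choose_Suc_shift:
  fixes f :: "nat \<Rightarrow> nat"
  shows "(\<Sum>i\<le>Suc a. (Suc a choose i) * f i) =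
    (\<Sum>i\<le>a. (a choose i) * f i) + (\<Sum>i\<le>a. (a choose i) * f (Suc i))"
proof -
  have "(\<Sum>i\<le>Suc a. (Suc a choose i) * f i) =
      f 0 + (\<Sum>i\<le>a. (a choose i) * f (Suc i)) + (\<Sum>i\<le>a. (a choose Suc i) * f (Suc i))"
    by (simp only: sum.atMost_Suc_shift) (simp add: sum.distrib algebra_simps)
  moreover have "f 0 + (\<Sum>i\<le>a. (a choose Suc i) * f (Suc i)) = (\<Sum>i\<le>Suc a. (a choose i) * f i)"
    by (simp only: sum.atMost_Suc_shift) simp
  ultimately show ?thesis by simp
qed

lemma Stirling_Suc_Suc_binomial:
  "Stirling (Suc a) (Suc s) = (\<Sum>k\<le>a. (a choose k) * Stirling k s)"
proof (induction a arbitrary: s)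
  case 0
  then show ?case by (cases s) auto
next
  case (Suc a)
  show ?case
  proof (cases s)
    case 0
    have "(\<Sum>k\<le>Suc a. (Suc a choose k) * Stirling k 0) = 1"
      by (simp only: sum.atMost_Suc_shift) simp
    then show ?thesis using 0 Stirling_1[of "Suc a"] by (simp del: Stirling.simps)
  next
    case (Suc s')
    have "Stirling (Suc (Suc a)) (Suc s) = Suc s * Stirling (Suc a) (Suc s) + Stirling (Suc a) s"
      by simp
    also have "\<dots> = Suc s * (\<Sum>i\<le>a. (a choose i) * Stirling i s) + (\<Sum>i\<le>a. (a choose i) * Stirling i s')"
      using Suc.IH[of s] Suc.IH[of s'] Suc by simp
    also have "\<dots> = (\<Sum>i\<le>Suc a. (Suc a choose i) * Stirling i s)"
      unfolding sum_choose_Suc_shift using Suc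
      by (simp add: sum.distrib sum_distrib_left algebra_simps)
    finally show ?thesis .
  qed
qed

lemma finite_msupp: "\<nu> \<in> multi_indices \<Longrightarrow> finite (msupp \<nu>)"
  by (simp add: multi_indices_def)

lemma msupp_mono: "\<forall>i. m i \<le> \<nu> i \<Longrightarrow> msupp m \<subseteq> msupp \<nu>"
  unfolding msupp_def by (smt (verit) Collect_mono le_zero_eq)

lemma multi_indices_le: "\<nu> \<in> multi_indices \<Longrightarrow> \<forall>i. m i \<le> \<nu> i \<Longrightarrow> m \<in> multi_indices"
  unfolding multi_indices_def by (auto intro: finite_subset[OF msupp_mono])

lemma multi_indices_fun_upd: "\<nu> \<in> multi_indices \<Longrightarrow> \<nu>(j := t) \<in> multi_indices"
  unfolding multi_indices_def
  by (auto intro: finite_subset[of _ "insert j (msupp \<nu>)"] simp: msupp_def)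

lemma mabs_eq_sum: "finite A \<Longrightarrow> msupp \<nu> \<subseteq> A \<Longrightarrow> mabs \<nu> = sum \<nu> A"
  unfolding mabs_def by (rule sum.mono_neutral_left) (auto simp: msupp_def)

lemma mabs_fun_upd:
  assumes "\<nu> \<in> multi_indices"
  shows "mabs (\<nu>(j := t)) = mabs \<nu> - \<nu> j + t" and "\<nu> j \<le> mabs \<nu>"
proof -
  let ?A = "insert j (msupp \<nu>)"
  have A: "finite ?A" using finite_msupp[OF assms] by simp
  have "mabs (\<nu>(j := t)) = sum (\<nu>(j := t)) ?A"
    using A by (rule mabs_eq_sum) (auto simp: msupp_def)
  also have "\<dots> = sum \<nu> (?A - {j}) + t"
    using A by (simp add: sum.remove[of ?A j] cong: sum.cong_simp)
  finally have upd: "mabs (\<nu>(j := t)) = sum \<nu> (?A - {j}) + t" .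
  have "mabs \<nu> = sum \<nu> ?A" using A by (rule mabs_eq_sum) auto
  also have "\<dots> = \<nu> j + sum \<nu> (?A - {j})" using A by (rule sum.remove) simp
  finally have "mabs \<nu> = \<nu> j + sum \<nu> (?A - {j})" .
  with upd show "mabs (\<nu>(j := t)) = mabs \<nu> - \<nu> j + t" and "\<nu> j \<le> mabs \<nu>"
    by linarith+
qed

lemma mabs_mono:
  assumes "\<nu> \<in> multi_indices" "\<forall>i. m i \<le> \<nu> i"
  shows "mabs m \<le> mabs \<nu>"
proof -
  have "mabs m = sum m (msupp \<nu>)"
    using finite_msupp[OF assms(1)] msupp_mono[OF assms(2)] by (rule mabs_eq_sum)
  also have "\<dots> \<le> mabs \<nu>" unfolding mabs_def using assms(2) by (intro sum_mono) auto
  finally show ?thesis .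
qed

lemma mabs_eq_0_iff: "\<nu> \<in> multi_indices \<Longrightarrow> mabs \<nu> = 0 \<longleftrightarrow> \<nu> = (\<lambda>_. 0)"
  unfolding mabs_def multi_indices_def by (auto simp: msupp_def)

definition sub_indices :: "(nat \<Rightarrow> nat) \<Rightarrow> nat \<Rightarrow> (nat \<Rightarrow> nat) set" where
  "sub_indices \<nu> n = {m. (\<forall>i. m i \<le> \<nu> i) \<and> mabs m = n}"

lemma finite_sub_indices:
  assumes "\<nu> \<in> multi_indices"
  shows "finite (sub_indices \<nu> n)"
proof -
  let ?A = "msupp \<nu>"
  have "sub_indices \<nu> n \<subseteq> {m. \<forall>x. (x \<in> ?A \<longrightarrow> m x \<in> {..mabs \<nu>}) \<and> (x \<notin> ?A \<longrightarrow> m x = 0)}"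
  proof (intro subsetI CollectI allI)
    fix m x assume "m \<in> sub_indices \<nu> n"
    then have "m x \<le> \<nu> x" by (simp add: sub_indices_def)
    then show "(x \<in> ?A \<longrightarrow> m x \<in> {..mabs \<nu>}) \<and> (x \<notin> ?A \<longrightarrow> m x = 0)"
      using mabs_fun_upd(2)[OF assms, of x] by (simp add: msupp_def)
  qed
  moreover have "finite {m. \<forall>x. (x \<in> ?A \<longrightarrow> m x \<in> {..mabs \<nu>}) \<and> (x \<notin> ?A \<longrightarrow> m x = (0::nat))}"
    using finite_msupp[OF assms] by (intro finite_set_of_finite_funs) auto
  ultimately show ?thesis by (rule finite_subset)
qed

definition stirling_weight :: "(nat \<Rightarrow> real) \<Rightarrow> (nat \<Rightarrow> nat) \<Rightarrow> (nat \<Rightarrow> nat) \<Rightarrow> real" where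
  "stirling_weight \<beta> \<nu> m = mpow \<beta> m * (\<Prod>i\<in>msupp \<nu>. real (Stirling (\<nu> i) (m i)))"

definition stirling_sum :: "(nat \<Rightarrow> real) \<Rightarrow> (nat \<Rightarrow> nat) \<Rightarrow> nat \<Rightarrow> real" where
  "stirling_sum \<beta> \<nu> n = (\<Sum>m\<in>sub_indices \<nu> n. stirling_weight \<beta> \<nu> m)"

lemma stirling_weight_eq_prod:
  assumes "finite A" "msupp \<nu> \<subseteq> A" "\<forall>i. m i \<le> \<nu> i"
  shows "stirling_weight \<beta> \<nu> m = (\<Prod>i\<in>A. \<beta> i ^ m i * real (Stirling (\<nu> i) (m i)))"
proof -
  have zero: "m i = 0" if "\<nu> i = 0" for i using assms(3) that by (metis le_zero_eq)
  have "mpow \<beta> m = (\<Prod>i\<in>A. \<beta> i ^ m i)"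
    unfolding mpow_def using assms msupp_mono[OF assms(3)]
    by (intro prod.mono_neutral_left) (auto simp: msupp_def)
  moreover have "(\<Prod>i\<in>msupp \<nu>. real (Stirling (\<nu> i) (m i))) = (\<Prod>i\<in>A. real (Stirling (\<nu> i) (m i)))"
    using assms zero by (intro prod.mono_neutral_left) (auto simp: msupp_def)
  ultimately show ?thesis by (simp add: stirling_weight_def prod.distrib)
qed

lemma stirling_weight_fun_upd:
  assumes "\<nu> \<in> multi_indices" "\<forall>i. m i \<le> (\<nu>(j := 0)) i" "t \<le> \<nu> j"
  shows "stirling_weight \<beta> \<nu> (m(j := t)) =
    \<beta> j ^ t * real (Stirling (\<nu> j) t) * stirling_weight \<beta> (\<nu>(j := 0)) m"
proof -
  let ?A = "insert j (msupp \<nu>)"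
  let ?f = "\<lambda>\<nu> m i. \<beta> i ^ m i * real (Stirling (\<nu> i) (m i))"
  have A: "finite ?A" "j \<in> ?A" using finite_msupp[OF assms(1)] by simp_all
  have le: "\<forall>i. (m(j := t)) i \<le> \<nu> i" using assms(2,3) by (auto split: if_splits)
  have "stirling_weight \<beta> \<nu> (m(j := t)) = (\<Prod>i\<in>?A. ?f \<nu> (m(j := t)) i)"
    by (rule stirling_weight_eq_prod[OF A(1) _ le]) auto
  also have "\<dots> = ?f \<nu> (m(j := t)) j * (\<Prod>i\<in>?A - {j}. ?f \<nu> m i)"
    by (subst prod.remove[OF A]) (simp cong: prod.cong_simp)
  also have "(\<Prod>i\<in>?A - {j}. ?f \<nu> m i) = (\<Prod>i\<in>?A. ?f (\<nu>(j := 0)) m i)"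
  proof -
    have "m j = 0" using assms(2) by (metis fun_upd_same le_zero_eq)
    then show ?thesis unfolding prod.remove[OF A, of "?f (\<nu>(j := 0)) m"] by (simp cong: prod.cong_simp)
  qed
  also have "\<dots> = stirling_weight \<beta> (\<nu>(j := 0)) m"
    by (rule stirling_weight_eq_prod[OF A(1) _ assms(2), symmetric]) (auto simp: msupp_def)
  finally show ?thesis by (simp only: fun_upd_same)
qed

lemma sum_sub_indices_split:
  assumes nu: "\<nu> \<in> multi_indices"
  shows "(\<Sum>m\<in>sub_indices \<nu> n. F m) =
    (\<Sum>t=0..min n (\<nu> j). \<Sum>m\<in>sub_indices (\<nu>(j := 0)) (n - t). F (m(j := t)))"
proof -
  let ?S = "Sigma {0..min n (\<nu> j)} (\<lambda>t. sub_indices (\<nu>(j := 0)) (n - t))"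
  have nu0: "\<nu>(j := 0) \<in> multi_indices" using nu by (rule multi_indices_fun_upd)
  have "(\<Sum>t=0..min n (\<nu> j). \<Sum>m\<in>sub_indices (\<nu>(j := 0)) (n - t). F (m(j := t)))
      = (\<Sum>(t, m)\<in>?S. F (m(j := t)))"
    using finite_sub_indices[OF nu0] by (intro sum.Sigma) auto
  also have "\<dots> = (\<Sum>m\<in>sub_indices \<nu> n. F m)"
  proof (rule sum.reindex_bij_witness[where j = "\<lambda>(t, m). m(j := t)" and i = "\<lambda>m. (m j, m(j := 0))"])
    fix a assume "a \<in> ?S"
    then obtain t m where a: "a = (t, m)" "t \<le> n" "t \<le> \<nu> j"
      and m: "\<forall>i. m i \<le> (\<nu>(j := 0)) i" "mabs m = n - t"
      by (auto simp: sub_indices_def)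
    have mj: "m j = 0" using m(1) by (metis fun_upd_same le_zero_eq)
    then show "(\<lambda>m. (m j, m(j := 0))) ((\<lambda>(t, m). m(j := t)) a) = a" using a by auto
    have "mabs (m(j := t)) = n"
      using mabs_fun_upd(1)[OF multi_indices_le[OF nu0 m(1)]] m(2) mj a by simp
    moreover have "\<forall>i. (m(j := t)) i \<le> \<nu> i"
    proof
      fix i show "(m(j := t)) i \<le> \<nu> i" using m(1)[rule_format, of i] a by (cases "i = j") auto
    qed
    ultimately show "(\<lambda>(t, m). m(j := t)) a \<in> sub_indices \<nu> n" using a by (simp add: sub_indices_def)
  next
    fix b assume "b \<in> sub_indices \<nu> n"
    then have b: "\<forall>i. b i \<le> \<nu> i" "mabs b = n" by (auto simp: sub_indices_def)
    have bMI: "b \<in> multi_indices" using multi_indices_le[OF nu b(1)] .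
    show "(\<lambda>(t, m). m(j := t)) ((\<lambda>m. (m j, m(j := 0))) b) = b" by simp
    have "b j \<le> n" using mabs_fun_upd(2)[OF bMI] b(2) by simp
    moreover have "mabs (b(j := 0)) = n - b j" using mabs_fun_upd(1)[OF bMI] b(2) by simp
    moreover have "\<forall>i. (b(j := 0)) i \<le> (\<nu>(j := 0)) i" using b(1) by simp
    ultimately show "(\<lambda>m. (m j, m(j := 0))) b \<in> ?S" using b(1) by (simp add: sub_indices_def)
  qed auto
  finally show ?thesis ..
qed

lemma stirling_sum_split:
  assumes nu: "\<nu> \<in> multi_indices"
  shows "stirling_sum \<beta> \<nu> n =
    (\<Sum>t=0..n. \<beta> j ^ t * real (Stirling (\<nu> j) t) * stirling_sum \<beta> (\<nu>(j := 0)) (n - t))"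
proof -
  have "stirling_sum \<beta> \<nu> n =
      (\<Sum>t=0..min n (\<nu> j). \<Sum>m\<in>sub_indices (\<nu>(j := 0)) (n - t). stirling_weight \<beta> \<nu> (m(j := t)))"
    unfolding stirling_sum_def by (rule sum_sub_indices_split[OF nu])
  also have "\<dots> = (\<Sum>t=0..min n (\<nu> j).
      \<beta> j ^ t * real (Stirling (\<nu> j) t) * stirling_sum \<beta> (\<nu>(j := 0)) (n - t))"
    unfolding stirling_sum_def sum_distrib_left
    by (intro sum.cong refl stirling_weight_fun_upd[OF nu]) (auto simp: sub_indices_def)
  also have "\<dots> = (\<Sum>t=0..n. \<beta> j ^ t * real (Stirling (\<nu> j) t) * stirling_sum \<beta> (\<nu>(j := 0)) (n - t))"
    by (rule sum.mono_neutral_left) auto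
  finally show ?thesis .
qed

lemma sum_Stirling_Suc_convolution:
  fixes b :: real and g :: "nat \<Rightarrow> real"
  shows "(\<Sum>t=0..Suc n. b ^ t * real (Stirling (Suc x) t) * g (Suc n - t)) =
    b * (\<Sum>k=0..x. real (x choose k) * (\<Sum>s=0..n. b ^ s * real (Stirling (x - k) s) * g (n - s)))"
proof -
  have Stirling_rev: "real (Stirling (Suc x) (Suc s)) = (\<Sum>k=0..x. real (x choose k) * real (Stirling (x - k) s))" for s
  proof -
    have "(\<Sum>k=0..x. (x choose k) * Stirling (x - k) s) = (\<Sum>k=0..x. (x choose (x - k)) * Stirling (x - k) s)"
      by (intro sum.cong refl) (simp add: binomial_symmetric[symmetric])
    also have "\<dots> = (\<Sum>k\<le>x. (x choose k) * Stirling k s)"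
      by (subst sum.atLeastAtMost_rev) (simp add: atLeast0AtMost)
    finally have "Stirling (Suc x) (Suc s) = (\<Sum>k=0..x. (x choose k) * Stirling (x - k) s)"
      unfolding Stirling_Suc_Suc_binomial ..
    then show ?thesis by (simp only: of_nat_sum of_nat_mult)
  qed
  have "(\<Sum>t=0..Suc n. b ^ t * real (Stirling (Suc x) t) * g (Suc n - t)) =
      (\<Sum>s=0..n. b ^ Suc s * real (Stirling (Suc x) (Suc s)) * g (n - s))"
    by (subst sum.atLeast0_atMost_Suc_shift) simp
  also have "\<dots> = (\<Sum>s=0..n. \<Sum>k=0..x. b * (real (x choose k) * (b ^ s * real (Stirling (x - k) s) * g (n - s))))"
    unfolding Stirling_rev by (simp add: sum_distrib_left sum_distrib_right mult_ac)
  also have "\<dots> = b * (\<Sum>k=0..x. real (x choose k) * (\<Sum>s=0..n. b ^ s * real (Stirling (x - k) s) * g (n - s)))"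
    by (subst sum.swap) (simp add: sum_distrib_left)
  finally show ?thesis .
qed

lemma stirling_sum_Suc:
  assumes nu: "\<nu> \<in> multi_indices"
  shows "stirling_sum \<beta> (\<nu>(j := \<nu> j + 1)) (Suc n) =
    \<beta> j * (\<Sum>k=0..\<nu> j. real (\<nu> j choose k) * stirling_sum \<beta> (\<nu>(j := \<nu> j - k)) n)"
proof -
  define g where "g = stirling_sum \<beta> (\<nu>(j := 0))"
  have split: "stirling_sum \<beta> (\<nu>(j := x)) N = (\<Sum>t=0..N. \<beta> j ^ t * real (Stirling x t) * g (N - t))" for x N
    using stirling_sum_split[OF multi_indices_fun_upd[OF nu, of j x], where n = N and j = j] by (simp add: g_def)
  show ?thesis
    unfolding split Suc_eq_plus1[symmetric] by (rule sum_Stirling_Suc_convolution)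
qed

lemma stirling_sum_0:
  assumes nu: "\<nu> \<in> multi_indices"
  shows "stirling_sum \<beta> \<nu> 0 = (if \<nu> = (\<lambda>_. 0) then 1 else 0)"
proof -
  have "sub_indices \<nu> 0 = {\<lambda>_. 0}"
    using mabs_eq_0_iff multi_indices_le[OF nu] by (auto simp: sub_indices_def)
  moreover have "(\<Prod>i\<in>msupp \<nu>. real (Stirling (\<nu> i) 0)) = (if \<nu> = (\<lambda>_. 0) then 1 else 0)"
  proof (cases "\<nu> = (\<lambda>_. 0)")
    case False
    then obtain i where "\<nu> i \<noteq> 0" by auto
    then have "i \<in> msupp \<nu>" "real (Stirling (\<nu> i) 0) = 0" by (auto simp: msupp_def gr0_conv_Suc)
    then show ?thesis using finite_msupp[OF nu] False by (auto intro: prod_zero)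
  qed (simp add: msupp_def)
  ultimately show ?thesis by (simp add: stirling_sum_def stirling_weight_def mpow_def msupp_def)
qed

definition multinomial_coeff :: "nat \<Rightarrow> (nat \<Rightarrow> int) \<Rightarrow> real" where
  "multinomial_coeff d lam = real (fact (nat (zabs d lam))) / real (zfact d lam)"

lemma zabs_nonneg: "\<forall>l<d. lam l \<ge> 0 \<Longrightarrow> zabs d lam \<ge> 0"
  unfolding zabs_def by (rule sum_nonneg) auto

lemma zabs_pos:
  assumes "lam \<in> zvecs d" "\<forall>l<d. lam l \<ge> 0" "lam \<noteq> (\<lambda>_. 0)"
  shows "zabs d lam \<ge> 1"
proof -
  obtain l where "lam l \<noteq> 0" using assms(3) by auto
  moreover have "l < d" using \<open>lam l \<noteq> 0\<close> assms(1) by (auto simp: zvecs_def not_less[symmetric])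
  ultimately have "l < d" "lam l > 0" using assms(2) by (auto simp: order_le_less)
  moreover have "lam l \<le> zabs d lam" unfolding zabs_def using assms(2) \<open>l < d\<close>
    by (intro member_le_sum) auto
  ultimately show ?thesis by simp
qed

lemma zabs_fun_upd: "l < d \<Longrightarrow> zabs d (lam(l := x)) = zabs d lam - lam l + x"
  unfolding zabs_def by (simp add: sum.remove[of "{..<d}" l] cong: sum.cong_simp)

lemma zfact_decr:
  assumes "l < d" "lam l > 0"
  shows "zfact d lam = nat (lam l) * zfact d (lam(l := lam l - 1))"
proof -
  have "fact (nat (lam l)) = nat (lam l) * (fact (nat (lam l - 1)) :: nat)"
    using assms(2) by (simp add: fact_reduce nat_diff_distrib)
  then show ?thesis
    unfolding zfact_def using assms(1) by (simp add: prod.remove[of "{..<d}" l] cong: prod.cong_simp)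
qed

lemma multinomial_coeff_rec:
  assumes lam: "lam \<in> zvecs d" "\<forall>l<d. lam l \<ge> 0" "lam \<noteq> (\<lambda>_. 0)"
  shows "(\<Sum>l\<in>{l. l < d \<and> lam l > 0}. multinomial_coeff d (lam(l := lam l - 1))) = multinomial_coeff d lam"
proof -
  let ?L = "{l. l < d \<and> lam l > 0}"
  define N where "N = nat (zabs d lam)"
  have N: "N \<ge> 1" using zabs_pos[OF lam] by (simp add: N_def)
  have "(\<Sum>l\<in>?L. real_of_int (lam l)) = (\<Sum>l<d. real_of_int (lam l))"
    by (rule sum.mono_neutral_left) (use lam(2) in \<open>auto simp: not_less\<close>)
  also have "\<dots> = real N"
    using zabs_nonneg[OF lam(2)] by (simp add: N_def zabs_def)
  finally have sum_L: "(\<Sum>l\<in>?L. real_of_int (lam l)) = real N" .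
  have summand: "multinomial_coeff d (lam(l := lam l - 1)) = real (fact (N - 1)) * real_of_int (lam l) / real (zfact d lam)"
    if "l \<in> ?L" for l
  proof -
    have "nat (zabs d (lam(l := lam l - 1))) = N - 1" using that by (simp add: zabs_fun_upd N_def)
    moreover have "real (zfact d lam) = real (nat (lam l)) * real (zfact d (lam(l := lam l - 1)))"
      using zfact_decr[of l d lam] that by simp
    moreover have "zfact d lam > 0" unfolding zfact_def by (simp add: prod_pos)
    ultimately show ?thesis using that by (simp add: multinomial_coeff_def field_simps)
  qed
  have "(\<Sum>l\<in>?L. multinomial_coeff d (lam(l := lam l - 1))) = real (fact (N - 1)) * real N / real (zfact d lam)"
    by (simp add: summand sum_divide_distrib[symmetric] sum_distrib_left[symmetric] sum_L)
  also have "\<dots> = multinomial_coeff d lam"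
    using N by (simp add: multinomial_coeff_def N_def[symmetric] fact_reduce[of N])
  finally show ?thesis .
qed

lemma bound_A4_eq_stirling_sum:
  assumes "\<forall>l<d. lam l \<ge> 0"
  shows "bound_A4 d c \<beta> \<nu> lam = c ^ mabs \<nu> * multinomial_coeff d lam * stirling_sum \<beta> \<nu> (nat (zabs d lam))"
proof -
  have "{m. (\<forall>i. m i \<le> \<nu> i) \<and> int (mabs m) = zabs d lam} = sub_indices \<nu> (nat (zabs d lam))"
    using zabs_nonneg[OF assms] by (auto simp: sub_indices_def)
  then show ?thesis
    by (simp add: bound_A4_def multinomial_coeff_def stirling_sum_def stirling_weight_def)
qed

lemma bound_A4_small:
  assumes "\<nu> \<in> multi_indices" "int (mabs \<nu>) < zabs d lam"
  shows "bound_A4 d c \<beta> \<nu> lam = 0"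
proof -
  have "int (mabs m) \<noteq> zabs d lam" if "\<forall>i. m i \<le> \<nu> i" for m
    using mabs_mono[OF assms(1) that] assms(2) by linarith
  then have empty: "{m. (\<forall>i. m i \<le> \<nu> i) \<and> int (mabs m) = zabs d lam} = {}" by blast
  show ?thesis unfolding bound_A4_def empty by simp
qed

lemma bound_A4_zero:
  assumes "\<nu> \<in> multi_indices"
  shows "bound_A4 d c \<beta> \<nu> (\<lambda>_. 0) = (if \<nu> = (\<lambda>_. 0) then 1 else 0)"
  using stirling_sum_0[OF assms]
  by (simp add: bound_A4_eq_stirling_sum multinomial_coeff_def zabs_def zfact_def mabs_def msupp_def)

lemma sum_bound_A4_decr:
  assumes lam: "lam \<in> zvecs d" "\<forall>l<d. lam l \<ge> 0" "lam \<noteq> (\<lambda>_. 0)"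
  shows "(\<Sum>l\<in>{l. l < d \<and> lam l > 0}. bound_A4 d c \<beta> \<mu> (lam(l := lam l - 1))) =
    c ^ mabs \<mu> * multinomial_coeff d lam * stirling_sum \<beta> \<mu> (nat (zabs d lam) - 1)"
proof -
  have "bound_A4 d c \<beta> \<mu> (lam(l := lam l - 1)) =
      c ^ mabs \<mu> * stirling_sum \<beta> \<mu> (nat (zabs d lam) - 1) * multinomial_coeff d (lam(l := lam l - 1))"
    if "l < d" "lam l > 0" for l
  proof -
    have "\<forall>i<d. (lam(l := lam l - 1)) i \<ge> 0" using lam(2) that by auto
    moreover have "nat (zabs d (lam(l := lam l - 1))) = nat (zabs d lam) - 1"
      using that by (simp add: zabs_fun_upd nat_diff_distrib)
    ultimately show ?thesis by (simp add: bound_A4_eq_stirling_sum)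
  qed
  then have "(\<Sum>l\<in>{l. l < d \<and> lam l > 0}. bound_A4 d c \<beta> \<mu> (lam(l := lam l - 1))) =
      (\<Sum>l\<in>{l. l < d \<and> lam l > 0}. c ^ mabs \<mu> * stirling_sum \<beta> \<mu> (nat (zabs d lam) - 1) *
        multinomial_coeff d (lam(l := lam l - 1)))"
    by (intro sum.cong) auto
  also have "\<dots> = c ^ mabs \<mu> * stirling_sum \<beta> \<mu> (nat (zabs d lam) - 1) * multinomial_coeff d lam"
    by (simp only: sum_distrib_left[symmetric] multinomial_coeff_rec[OF lam])
  finally show ?thesis by (simp only: mult_ac)
qed

lemma bound_A4_rec:
  assumes nu: "\<nu> \<in> multi_indices"
    and lam: "lam \<in> zvecs d" "\<forall>l<d. lam l \<ge> 0" "lam \<noteq> (\<lambda>_. 0)"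
  shows "bound_A4 d c \<beta> (\<nu>(j := \<nu> j + 1)) lam = rec_rhs d c \<beta> (bound_A4 d c \<beta>) \<nu> lam j"
proof -
  let ?S = "\<lambda>k. stirling_sum \<beta> (\<nu>(j := \<nu> j - k))"
  define N where "N = nat (zabs d lam) - 1"
  define M where "M = multinomial_coeff d lam"
  have N: "nat (zabs d lam) = Suc N" using zabs_pos[OF lam] by (simp add: N_def)
  have mj: "\<nu> j \<le> mabs \<nu>" by (rule mabs_fun_upd(2)[OF nu])
  have summand: "c ^ (k + 1) * real (\<nu> j choose k) *
      (\<Sum>l\<in>{l. l < d \<and> lam l > 0}. bound_A4 d c \<beta> (\<nu>(j := \<nu> j - k)) (lam(l := lam l - 1))) =
      c ^ (mabs \<nu> + 1) * M * (real (\<nu> j choose k) * ?S k N)" if "k \<le> \<nu> j" for k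
  proof -
    have "mabs (\<nu>(j := \<nu> j - k)) = mabs \<nu> - k" using mabs_fun_upd(1)[OF nu] that mj by simp
    then have "c ^ (k + 1) * real (\<nu> j choose k) *
        (\<Sum>l\<in>{l. l < d \<and> lam l > 0}. bound_A4 d c \<beta> (\<nu>(j := \<nu> j - k)) (lam(l := lam l - 1))) =
        (c ^ (k + 1) * c ^ (mabs \<nu> - k)) * M * (real (\<nu> j choose k) * ?S k N)"
      unfolding sum_bound_A4_decr[OF lam] M_def N_def by (simp only: mult_ac)
    also have "c ^ (k + 1) * c ^ (mabs \<nu> - k) = c ^ (mabs \<nu> + 1)"
      using that mj by (simp add: power_add[symmetric])
    finally show ?thesis .
  qed
  have "rec_rhs d c \<beta> (bound_A4 d c \<beta>) \<nu> lam j =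
      \<beta> j * (\<Sum>k=0..\<nu> j. c ^ (mabs \<nu> + 1) * M * (real (\<nu> j choose k) * ?S k N))"
    unfolding rec_rhs_def by (intro arg_cong[where f = "(*) (\<beta> j)"] sum.cong refl summand) simp
  also have "\<dots> = c ^ (mabs \<nu> + 1) * M * stirling_sum \<beta> (\<nu>(j := \<nu> j + 1)) (Suc N)"
    unfolding stirling_sum_Suc[OF nu] by (simp add: sum_distrib_left mult_ac)
  also have "\<dots> = bound_A4 d c \<beta> (\<nu>(j := \<nu> j + 1)) lam"
    unfolding bound_A4_eq_stirling_sum[OF lam(2)] N M_def
    using mabs_fun_upd(1)[OF nu, of j "\<nu> j + 1"] mj by simp
  finally show ?thesis ..
qed

lemma rec_rhs_mono:
  assumes "c \<ge> 0" "\<beta> j \<ge> 0"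
    and "\<And>k l. k \<le> \<nu> j \<Longrightarrow> l < d \<Longrightarrow> lam l > 0 \<Longrightarrow>
      Y (\<nu>(j := \<nu> j - k)) (lam(l := lam l - 1)) \<le> Z (\<nu>(j := \<nu> j - k)) (lam(l := lam l - 1))"
  shows "rec_rhs d c \<beta> Y \<nu> lam j \<le> rec_rhs d c \<beta> Z \<nu> lam j"
  unfolding rec_rhs_def using assms by (intro mult_left_mono sum_mono) auto

lemma rec_rhs_comparison:
  fixes Y Z :: "(nat \<Rightarrow> nat) \<Rightarrow> (nat \<Rightarrow> int) \<Rightarrow> real"
  assumes c: "c > 0" and beta: "\<And>j. \<beta> j \<ge> 0"
    and zero: "\<And>\<nu>. \<nu> \<in> multi_indices \<Longrightarrow> Y \<nu> (\<lambda>_. 0) \<le> Z \<nu> (\<lambda>_. 0)"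
    and small: "\<And>\<nu> lam. \<nu> \<in> multi_indices \<Longrightarrow> lam \<in> zvecs d \<Longrightarrow> \<forall>l<d. lam l \<ge> 0 \<Longrightarrow>
      int (mabs \<nu>) < zabs d lam \<Longrightarrow> Y \<nu> lam \<le> Z \<nu> lam"
    and sub: "\<And>\<nu> lam j. \<nu> \<in> multi_indices \<Longrightarrow> lam \<in> zvecs d \<Longrightarrow> lam \<noteq> (\<lambda>_. 0) \<Longrightarrow>
      \<forall>l<d. lam l \<ge> 0 \<Longrightarrow> zabs d lam \<le> int (mabs \<nu>) + 1 \<Longrightarrow>
      Y (\<nu>(j := \<nu> j + 1)) lam \<le> rec_rhs d c \<beta> Y \<nu> lam j"
    and super: "\<And>\<nu> lam j. \<nu> \<in> multi_indices \<Longrightarrow> lam \<in> zvecs d \<Longrightarrow> lam \<noteq> (\<lambda>_. 0) \<Longrightarrow>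
      \<forall>l<d. lam l \<ge> 0 \<Longrightarrow> zabs d lam \<le> int (mabs \<nu>) + 1 \<Longrightarrow>
      rec_rhs d c \<beta> Z \<nu> lam j \<le> Z (\<nu>(j := \<nu> j + 1)) lam"
  shows "\<nu> \<in> multi_indices \<Longrightarrow> lam \<in> zvecs d \<Longrightarrow> \<forall>l<d. lam l \<ge> 0 \<Longrightarrow> Y \<nu> lam \<le> Z \<nu> lam"
proof (induction "mabs \<nu>" arbitrary: \<nu> lam rule: less_induct)
  case less
  note nu = less.prems(1) and lam = less.prems(2,3)
  consider "lam = (\<lambda>_. 0)" | "int (mabs \<nu>) < zabs d lam" | "lam \<noteq> (\<lambda>_. 0)" "zabs d lam \<le> int (mabs \<nu>)"
    by fastforce
  then show ?case
  proof cases
    case 1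
    then show ?thesis using zero[OF nu] by simp
  next
    case 2
    then show ?thesis using small nu lam by blast
  next
    case 3
    then have "mabs \<nu> \<noteq> 0" using zabs_pos[OF lam] by linarith
    then obtain j where j: "\<nu> j > 0" using mabs_eq_0_iff[OF nu] by auto
    define \<mu> where "\<mu> = \<nu>(j := \<nu> j - 1)"
    have mu: "\<mu> \<in> multi_indices" unfolding \<mu>_def by (rule multi_indices_fun_upd[OF nu])
    have nu_eq: "\<nu> = \<mu>(j := \<mu> j + 1)" using j by (auto simp: \<mu>_def)
    have mabs_mu: "mabs \<mu> = mabs \<nu> - 1" using mabs_fun_upd[OF nu, of j] j by (simp add: \<mu>_def)
    have IH: "Y (\<mu>(j := \<mu> j - k)) (lam(l := lam l - 1)) \<le> Z (\<mu>(j := \<mu> j - k)) (lam(l := lam l - 1))"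
      if "l < d" "lam l > 0" for k l
    proof (rule less.hyps)
      show "mabs (\<mu>(j := \<mu> j - k)) < mabs \<nu>"
        using mabs_fun_upd[OF mu, of j] mabs_mu \<open>mabs \<nu> \<noteq> 0\<close> by simp
      show "\<mu>(j := \<mu> j - k) \<in> multi_indices" by (rule multi_indices_fun_upd[OF mu])
      show "lam(l := lam l - 1) \<in> zvecs d" using lam(1) that by (auto simp: zvecs_def)
      show "\<forall>i<d. (lam(l := lam l - 1)) i \<ge> 0" using lam(2) that by auto
    qed
    have "zabs d lam \<le> int (mabs \<mu>) + 1" using 3 mabs_mu \<open>mabs \<nu> \<noteq> 0\<close> by linarith
    then have "Y \<nu> lam \<le> rec_rhs d c \<beta> Y \<mu> lam j"
      and "rec_rhs d c \<beta> Z \<mu> lam j \<le> Z \<nu> lam"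
      using sub[OF mu lam(1) 3(1) lam(2)] super[OF mu lam(1) 3(1) lam(2)] nu_eq by simp_all
    moreover have "rec_rhs d c \<beta> Y \<mu> lam j \<le> rec_rhs d c \<beta> Z \<mu> lam j"
      using c beta IH by (intro rec_rhs_mono) auto
    ultimately show ?thesis by linarith
  qed
qed

lemma le_bound_A4:
  fixes Y :: "(nat \<Rightarrow> nat) \<Rightarrow> (nat \<Rightarrow> int) \<Rightarrow> real"
  assumes c: "c > 0" and beta: "\<And>j. \<beta> j \<ge> 0"
    and Y_zero: "\<And>\<nu>. \<nu> \<in> multi_indices \<Longrightarrow> Y \<nu> (\<lambda>_. 0) = (if \<nu> = (\<lambda>_. 0) then 1 else 0)"
    and Y_small: "\<And>\<nu> lam. \<nu> \<in> multi_indices \<Longrightarrow> lam \<in> zvecs d \<Longrightarrow>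
      int (mabs \<nu>) < zabs d lam \<Longrightarrow> Y \<nu> lam = 0"
    and sub: "\<And>\<nu> lam j. \<nu> \<in> multi_indices \<Longrightarrow> lam \<in> zvecs d \<Longrightarrow> lam \<noteq> (\<lambda>_. 0) \<Longrightarrow>
      \<forall>l<d. lam l \<ge> 0 \<Longrightarrow> zabs d lam \<le> int (mabs \<nu>) + 1 \<Longrightarrow>
      Y (\<nu>(j := \<nu> j + 1)) lam \<le> rec_rhs d c \<beta> Y \<nu> lam j"
    and "\<nu> \<in> multi_indices" "lam \<in> zvecs d" "\<forall>l<d. lam l \<ge> 0"
  shows "Y \<nu> lam \<le> bound_A4 d c \<beta> \<nu> lam"
proof (rule rec_rhs_comparison[OF c beta, where Z = "bound_A4 d c \<beta>"])
  show "Y \<nu> (\<lambda>_. 0) \<le> bound_A4 d c \<beta> \<nu> (\<lambda>_. 0)" if "\<nu> \<in> multi_indices" for \<nu>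
    using Y_zero[OF that] bound_A4_zero[OF that] by simp
  show "Y \<nu> lam \<le> bound_A4 d c \<beta> \<nu> lam"
    if "\<nu> \<in> multi_indices" "lam \<in> zvecs d" "\<forall>l<d. lam l \<ge> 0" "int (mabs \<nu>) < zabs d lam" for \<nu> lam
    using Y_small[OF that(1,2,4)] bound_A4_small[OF that(1,4)] by simp
  show "rec_rhs d c \<beta> (bound_A4 d c \<beta>) \<nu> lam j \<le> bound_A4 d c \<beta> (\<nu>(j := \<nu> j + 1)) lam"
    if "\<nu> \<in> multi_indices" "lam \<in> zvecs d" "lam \<noteq> (\<lambda>_. 0)" "\<forall>l<d. lam l \<ge> 0" for \<nu> lam j
    using bound_A4_rec[OF that(1,2,4,3)] by simp
qed (fact sub assms)+

lemma bound_A4_le: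
  fixes Y :: "(nat \<Rightarrow> nat) \<Rightarrow> (nat \<Rightarrow> int) \<Rightarrow> real"
  assumes c: "c > 0" and beta: "\<And>j. \<beta> j \<ge> 0"
    and Y_zero: "\<And>\<nu>. \<nu> \<in> multi_indices \<Longrightarrow> Y \<nu> (\<lambda>_. 0) = (if \<nu> = (\<lambda>_. 0) then 1 else 0)"
    and Y_small: "\<And>\<nu> lam. \<nu> \<in> multi_indices \<Longrightarrow> lam \<in> zvecs d \<Longrightarrow>
      int (mabs \<nu>) < zabs d lam \<Longrightarrow> Y \<nu> lam = 0"
    and super: "\<And>\<nu> lam j. \<nu> \<in> multi_indices \<Longrightarrow> lam \<in> zvecs d \<Longrightarrow> lam \<noteq> (\<lambda>_. 0) \<Longrightarrow>
      \<forall>l<d. lam l \<ge> 0 \<Longrightarrow> zabs d lam \<le> int (mabs \<nu>) + 1 \<Longrightarrow>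
      rec_rhs d c \<beta> Y \<nu> lam j \<le> Y (\<nu>(j := \<nu> j + 1)) lam"
    and "\<nu> \<in> multi_indices" "lam \<in> zvecs d" "\<forall>l<d. lam l \<ge> 0"
  shows "bound_A4 d c \<beta> \<nu> lam \<le> Y \<nu> lam"
proof (rule rec_rhs_comparison[OF c beta, where Y = "bound_A4 d c \<beta>"])
  show "bound_A4 d c \<beta> \<nu> (\<lambda>_. 0) \<le> Y \<nu> (\<lambda>_. 0)" if "\<nu> \<in> multi_indices" for \<nu>
    using Y_zero[OF that] bound_A4_zero[OF that] by simp
  show "bound_A4 d c \<beta> \<nu> lam \<le> Y \<nu> lam"
    if "\<nu> \<in> multi_indices" "lam \<in> zvecs d" "\<forall>l<d. lam l \<ge> 0" "int (mabs \<nu>) < zabs d lam" for \<nu> lam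
    using Y_small[OF that(1,2,4)] bound_A4_small[OF that(1,4)] by simp
  show "bound_A4 d c \<beta> (\<nu>(j := \<nu> j + 1)) lam \<le> rec_rhs d c \<beta> (bound_A4 d c \<beta>) \<nu> lam j"
    if "\<nu> \<in> multi_indices" "lam \<in> zvecs d" "lam \<noteq> (\<lambda>_. 0)" "\<forall>l<d. lam l \<ge> 0" for \<nu> lam j
    using bound_A4_rec[OF that(1,2,4,3)] by simp
qed (fact super assms)+

theorem lemmaA4:
  fixes d :: nat and c :: real and \<beta> :: "nat \<Rightarrow> real"
    and Y :: "(nat \<Rightarrow> nat) \<Rightarrow> (nat \<Rightarrow> int) \<Rightarrow> real"
  assumes d: "d \<ge> 1" and c: "c > 0"
    and beta_nonneg: "\<And>j. \<beta> j \<ge> 0"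
    and Y_nonneg: "\<And>\<nu> lam. \<nu> \<in> multi_indices \<Longrightarrow> lam \<in> zvecs d \<Longrightarrow> Y \<nu> lam \<ge> 0"
    and Y_zero: "\<And>\<nu>. \<nu> \<in> multi_indices \<Longrightarrow> Y \<nu> (\<lambda>_. 0) = (if \<nu> = (\<lambda>_. 0) then 1 else 0)"
    and Y_small: "\<And>\<nu> lam. \<nu> \<in> multi_indices \<Longrightarrow> lam \<in> zvecs d \<Longrightarrow>
         int (mabs \<nu>) < zabs d lam \<Longrightarrow> Y \<nu> lam = 0"
    and Y_neg: "\<And>\<nu> lam. \<nu> \<in> multi_indices \<Longrightarrow> lam \<in> zvecs d \<Longrightarrow>
         (\<exists>l<d. lam l < 0) \<Longrightarrow> Y \<nu> lam = 0"
  shows "((\<forall>\<nu>\<in>multi_indices. \<forall>lam\<in>zvecs d. \<forall>j.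
            lam \<noteq> (\<lambda>_. 0) \<and> (\<forall>l<d. lam l \<ge> 0) \<and> zabs d lam \<le> int (mabs \<nu>) + 1 \<longrightarrow>
            Y (\<nu>(j := \<nu> j + 1)) lam \<le> rec_rhs d c \<beta> Y \<nu> lam j)
         \<longrightarrow> (\<forall>\<nu>\<in>multi_indices. \<forall>lam\<in>zvecs d. (\<forall>l<d. lam l \<ge> 0) \<longrightarrow>
              Y \<nu> lam \<le> bound_A4 d c \<beta> \<nu> lam))
     \<and> ((\<forall>\<nu>\<in>multi_indices. \<forall>lam\<in>zvecs d. \<forall>j.
            lam \<noteq> (\<lambda>_. 0) \<and> (\<forall>l<d. lam l \<ge> 0) \<and> zabs d lam \<le> int (mabs \<nu>) + 1 \<longrightarrow>
            Y (\<nu>(j := \<nu> j + 1)) lam = rec_rhs d c \<beta> Y \<nu> lam j)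
         \<longrightarrow> (\<forall>\<nu>\<in>multi_indices. \<forall>lam\<in>zvecs d. (\<forall>l<d. lam l \<ge> 0) \<longrightarrow>
              Y \<nu> lam = bound_A4 d c \<beta> \<nu> lam))"
proof (intro conjI impI ballI)
  fix \<nu> lam
  assume "\<forall>\<nu>\<in>multi_indices. \<forall>lam\<in>zvecs d. \<forall>j.
      lam \<noteq> (\<lambda>_. 0) \<and> (\<forall>l<d. lam l \<ge> 0) \<and> zabs d lam \<le> int (mabs \<nu>) + 1 \<longrightarrow>
      Y (\<nu>(j := \<nu> j + 1)) lam \<le> rec_rhs d c \<beta> Y \<nu> lam j"
    and "\<nu> \<in> multi_indices" "lam \<in> zvecs d" "\<forall>l<d. lam l \<ge> 0"
  then show "Y \<nu> lam \<le> bound_A4 d c \<beta> \<nu> lam"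
    by (intro le_bound_A4[where Y = Y and d = d, OF c beta_nonneg Y_zero Y_small]) auto
next
  fix \<nu> lam
  assume "\<forall>\<nu>\<in>multi_indices. \<forall>lam\<in>zvecs d. \<forall>j.
      lam \<noteq> (\<lambda>_. 0) \<and> (\<forall>l<d. lam l \<ge> 0) \<and> zabs d lam \<le> int (mabs \<nu>) + 1 \<longrightarrow>
      Y (\<nu>(j := \<nu> j + 1)) lam = rec_rhs d c \<beta> Y \<nu> lam j"
    and "\<nu> \<in> multi_indices" "lam \<in> zvecs d" "\<forall>l<d. lam l \<ge> 0"
  then show "Y \<nu> lam = bound_A4 d c \<beta> \<nu> lam"
    by (intro order.antisym le_bound_A4[where Y = Y and d = d, OF c beta_nonneg Y_zero Y_small]
        bound_A4_le[where Y = Y and d = d, OF c beta_nonneg Y_zero Y_small]) auto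
qed

end
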